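(* Consider the networked feedback system described in the context, under the input assumption stated there, and let $d(k)=\sum_{i=0}^{\tau}\omega(k,k-i)u(k-i)$. Then for all integers $k_1,k_2\ge0$, $\mathbb E\{v(k_1)d(k_2)\}=0$.
   Context: Setting: $P$ is a SISO discrete-time LTI plant which is strictly proper (relative degree $\ge1$), $K$ a proper SISO LTI controller. Let $\tau\ge0$ be an integer, $\mathcal D=\{0,\dots,\tau\}$, and $\{\tau_n\}$ an i.i.d. sequence with values in $\mathcal D$, $\Pr\{\tau_n=i\}=p_i$, $\sum_ip_i=1$. With real weights $\alpha_0,\dots,\alpha_\tau$ and Kronecker delta $\delta$, the channel maps $u$ to $u_d(k)=\sum_{i=0}^{\tau}\alpha_i\delta(\tau_{k-i}-i)u(k-i)$. Closed loop: plant input $v-u_d$, plant output $y$, $u=Ky$; signals real, system at rest at $k=0$ (signals vanish for $k<0$). Define $\omega(k,n)=\alpha_{k-n}[\delta(\tau_n-(k-n))-p_{k-n}]$ if $n\le k\le n+\tau$ and $\omega(k,n)=0$ otherwise. Input assumption: $\{\tau_n\}$ is independent of $\{v(k)\}$, and $\{v(k)\}$ is zero-mean white noise (independent values) with bounded variances. *)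

theory Defs
  imports "HOL-Probability.Probability"
begin

definition mat_pow :: "real^'n^'n \<Rightarrow> nat \<Rightarrow> real^'n^'n" where
  "mat_pow A j = (((**) A) ^^ j) (mat 1)"

(* Impulse response of the SISO state-space system (A,B,C,D):
   h(0) = D, h(j) = C A^(j-1) B for j >= 1.  Zero initial state (system at rest). *)
definition ss_impulse :: "real^'n^'n \<Rightarrow> real^'n \<Rightarrow> real^'n \<Rightarrow> real \<Rightarrow> nat \<Rightarrow> real" where
  "ss_impulse A B C D j = (if j = 0 then D else C \<bullet> (mat_pow A (j - 1) *v B))"

definition kdelta :: "nat \<Rightarrow> nat \<Rightarrow> real" where
  "kdelta a b = (if a = b then 1 else 0)"

(* Channel output u_d(k) = sum_{i=0}^{tau} alpha_i delta(tau_{k-i} - i) u(k-i),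
   signals vanishing at negative times (so only i <= k contribute). *)
definition chan_out :: "nat \<Rightarrow> (nat \<Rightarrow> real) \<Rightarrow> (nat \<Rightarrow> 'a \<Rightarrow> nat) \<Rightarrow> (nat \<Rightarrow> 'a \<Rightarrow> real)
    \<Rightarrow> nat \<Rightarrow> 'a \<Rightarrow> real" where
  "chan_out T alpha tau u k w = (\<Sum>i\<in>{i. i \<le> T \<and> i \<le> k}. alpha i * kdelta (tau (k - i) w) i * u (k - i) w)"

definition omega_w :: "nat \<Rightarrow> (nat \<Rightarrow> real) \<Rightarrow> (nat \<Rightarrow> real) \<Rightarrow> (nat \<Rightarrow> 'a \<Rightarrow> nat)
    \<Rightarrow> nat \<Rightarrow> nat \<Rightarrow> 'a \<Rightarrow> real" where
  "omega_w T alpha p tau k n w =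
     (if n \<le> k \<and> k \<le> n + T then alpha (k - n) * (kdelta (tau n w) (k - n) - p (k - n)) else 0)"

definition d_sig :: "nat \<Rightarrow> (nat \<Rightarrow> real) \<Rightarrow> (nat \<Rightarrow> real) \<Rightarrow> (nat \<Rightarrow> 'a \<Rightarrow> nat)
    \<Rightarrow> (nat \<Rightarrow> 'a \<Rightarrow> real) \<Rightarrow> nat \<Rightarrow> 'a \<Rightarrow> real" where
  "d_sig T alpha p tau u k w = (\<Sum>i\<in>{i. i \<le> T \<and> i \<le> k}. omega_w T alpha p tau k (k - i) w * u (k - i) w)"

end

theory Submission
  imports Defs
begin

(*
  For each delay i the summand of d(k2) with n = k2 - i is a product of three factors: the
  centred delay indicator delta(tau_n - i) - p_i, the weight alpha_i and the controller output
  u(n).  Because the plant is strictly proper, u(n) is a measurable function of the noise and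
  delay samples v(j), tau(j) with j < n only, and |u(n)| <= C * (sum of |v(j)| for j < n), so all
  products with v(k1) are integrable once the noise is square integrable.  The samples v(j),
  tau(j) form one jointly independent family.  If n <= k1, the summand times v(k1) splits as
  v(k1) times a function of the other samples, and E v(k1) = 0; if n > k1, it splits as the
  centred indicator of tau_n times a function of the other samples, and the indicator has
  mean P(tau_n = i) - p_i = 0.
*)

lemma Int_stable_preimages: "Int_stable {X -` A \<inter> \<Omega> | A. A \<in> sets N}"
proof (rule Int_stableI)
  fix a b assume "a \<in> {X -` A \<inter> \<Omega> | A. A \<in> sets N}" "b \<in> {X -` A \<inter> \<Omega> | A. A \<in> sets N}"
  then obtain A B where "a = X -` A \<inter> \<Omega>" "b = X -` B \<inter> \<Omega>" "A \<in> sets N" "B \<in> sets N"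
    by blast
  then show "a \<inter> b \<in> {X -` A \<inter> \<Omega> | A. A \<in> sets N}"
    by (intro CollectI exI[of _ "A \<inter> B"]) auto
qed

lemma measurable_sigma_generatorI:
  assumes "G \<subseteq> Pow \<Omega>" "f \<in> \<Omega> \<rightarrow> space N" "\<And>A. A \<in> sets N \<Longrightarrow> f -` A \<inter> \<Omega> \<in> G"
  shows "f \<in> measurable (sigma \<Omega> G) N"
  using assms by (intro measurableI) (auto simp: sets_measure_of space_measure_of_conv)

lemma measurable_sigma_mono:
  assumes "G \<subseteq> H" "H \<subseteq> Pow \<Omega>" "f \<in> measurable (sigma \<Omega> G) N"
  shows "f \<in> measurable (sigma \<Omega> H) N"
proof (rule measurable_from_subalg[OF _ assms(3)])
  show "subalgebra (sigma \<Omega> H) (sigma \<Omega> G)"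
    using assms(1,2) by (auto simp: subalgebra_def sets_measure_of space_measure_of_conv intro!: sigma_sets_mono')
qed

lemma sigma_sets_component_preimages_subset:
  assumes "(\<lambda>w j. X j w) \<in> \<Omega> \<rightarrow> space (Pi\<^sub>M UNIV N)"
  shows "sigma_sets \<Omega> (\<Union>j. {X j -` A \<inter> \<Omega> | A. A \<in> sets (N j)})
    \<subseteq> {(\<lambda>w j. X j w) -` S \<inter> \<Omega> | S. S \<in> sets (Pi\<^sub>M UNIV N)}"
proof -
  let ?V = "vimage_algebra \<Omega> (\<lambda>w j. X j w) (Pi\<^sub>M UNIV N)"
  have "(\<lambda>w. (\<lambda>x. x j) ((\<lambda>w j. X j w) w)) \<in> measurable ?V (N j)" for j
    by (rule measurable_compose[OF measurable_vimage_algebra1[OF assms] measurable_component_singleton])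
      (rule UNIV_I)
  then have "X j -` A \<inter> \<Omega> \<in> sets ?V" if "A \<in> sets (N j)" for j A
    using measurable_sets[OF _ that, of "X j" ?V] by simp
  then have "sigma_sets \<Omega> (\<Union>j. {X j -` A \<inter> \<Omega> | A. A \<in> sets (N j)}) \<subseteq> sets ?V"
    using sets.top[of ?V] by (intro sets.sigma_sets_subset') auto
  then show ?thesis
    using sets_vimage_algebra2[OF assms] by simp
qed

context prob_space
begin

lemma indep_sets_events: "indep_sets F I \<Longrightarrow> i \<in> I \<Longrightarrow> F i \<subseteq> events"
  by (simp add: indep_sets_def)

lemma indep_set_subsets_swap:
  "indep_set A B \<Longrightarrow> C \<subseteq> B \<Longrightarrow> D \<subseteq> A \<Longrightarrow> indep_set C D"
  unfolding indep_sets2_eq by (auto simp: subset_iff) (metis Int_commute mult.commute)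

lemma indep_sets_space_INT:
  assumes "indep_sets F I" "finite K" "K \<subseteq> I" "\<forall>k\<in>K. A k \<in> F k"
  shows "space M \<inter> (\<Inter>k\<in>K. A k) \<in> sigma_sets (space M) (\<Union>i\<in>I. F i)"
    and "prob (space M \<inter> (\<Inter>k\<in>K. A k)) = (\<Prod>k\<in>K. prob (A k))"
proof -
  note ev = indep_sets_events[OF assms(1)]
  have "F i \<subseteq> Pow (space M)" if "i \<in> I" for i
    using ev[OF that] sets.space_closed by (rule subset_trans)
  then have "(\<Union>i\<in>I. F i) \<subseteq> Pow (space M)"
    by (rule UN_least)
  note S = sigma_algebra_sigma_sets[OF this]
  have INT: "space M \<inter> (\<Inter>k\<in>K. A k) = (\<Inter>k\<in>K. A k)" if ne: "K \<noteq> {}"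
  proof -
    obtain k0 where "k0 \<in> K"
      using ne by blast
    moreover have "A k0 \<subseteq> space M"
      using calculation assms(3,4) ev sets.sets_into_space by blast
    ultimately show ?thesis
      by blast
  qed
  have gen: "A k \<in> sigma_sets (space M) (\<Union>i\<in>I. F i)" if "k \<in> K" for k
  proof (rule sigma_sets.Basic)
    show "A k \<in> (\<Union>i\<in>I. F i)"
      using that assms(3,4) by blast
  qed
  show "space M \<inter> (\<Inter>k\<in>K. A k) \<in> sigma_sets (space M) (\<Union>i\<in>I. F i)"
  proof (cases "K = {}")
    case False
    interpret S: sigma_algebra "space M" "sigma_sets (space M) (\<Union>i\<in>I. F i)"
      by (rule S)
    show ?thesis
      unfolding INT[OF False] using S.finite_INT[OF assms(2) False gen] .
  qed (simp add: sigma_sets_top)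
  show "prob (space M \<inter> (\<Inter>k\<in>K. A k)) = (\<Prod>k\<in>K. prob (A k))"
  proof (cases "K = {}")
    case False
    show ?thesis
      unfolding INT[OF False] using indep_setsD[OF assms(1,3) False assms(2,4)] .
  qed (simp add: prob_space)
qed

lemma indep_sets_case_sum:
  assumes F: "indep_sets F I" and G: "indep_sets G J"
    and FG: "indep_set (sigma_sets (space M) (\<Union>i\<in>I. F i)) (sigma_sets (space M) (\<Union>j\<in>J. G j))"
  shows "indep_sets (case_sum F G) (I <+> J)"
proof (rule indep_setsI)
  show ev: "case_sum F G k \<subseteq> events" if "k \<in> I <+> J" for k
    using that by (elim PlusE) (simp_all add: indep_sets_events[OF F] indep_sets_events[OF G])
  fix K A assume K: "K \<subseteq> I <+> J" "K \<noteq> {}" "finite K" and A: "\<forall>k\<in>K. A k \<in> case_sum F G k"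
  define KF KG where "KF = Inl -` K" and "KG = Inr -` K"
  have KFG: "K = KF <+> KG"
  proof (rule set_eqI)
    show "k \<in> K \<longleftrightarrow> k \<in> KF <+> KG" for k
      by (cases k) (auto simp: KF_def KG_def)
  qed
  have fin: "finite KF" "finite KG"
    using K(3) unfolding KF_def KG_def by (auto intro: finite_vimageI)
  have sub: "KF \<subseteq> I" "KG \<subseteq> J" and AF: "\<forall>k\<in>KF. A (Inl k) \<in> F k" and AG: "\<forall>k\<in>KG. A (Inr k) \<in> G k"
    using K(1) A unfolding KF_def KG_def by auto
  define XF XG where "XF = space M \<inter> (\<Inter>k\<in>KF. A (Inl k))" and "XG = space M \<inter> (\<Inter>k\<in>KG. A (Inr k))"
  obtain k0 where "k0 \<in> K"
    using K(2) by blast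
  then have "A k0 \<in> events"
    using A K(1) ev by blast
  then have "(\<Inter>k\<in>K. A k) \<subseteq> space M"
    using \<open>k0 \<in> K\<close> sets.sets_into_space by blast
  moreover have "(\<Inter>k\<in>K. A k) = (\<Inter>k\<in>KF. A (Inl k)) \<inter> (\<Inter>k\<in>KG. A (Inr k))"
    unfolding KFG Plus_def by auto
  ultimately have "(\<Inter>k\<in>K. A k) = XF \<inter> XG"
    unfolding XF_def XG_def by blast
  also have "prob \<dots> = prob XF * prob XG"
    using FG indep_sets_space_INT(1)[OF F fin(1) sub(1) AF] indep_sets_space_INT(1)[OF G fin(2) sub(2) AG]
    unfolding XF_def XG_def by (rule indep_setD)
  also have "\<dots> = (\<Prod>k\<in>K. prob (A k))"
    unfolding XF_def XG_def KFG
    by (simp add: prod.Plus fin indep_sets_space_INT(2)[OF F fin(1) sub(1) AF]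
        indep_sets_space_INT(2)[OF G fin(2) sub(2) AG] comp_def)
  finally show "prob (\<Inter>k\<in>K. A k) = (\<Prod>k\<in>K. prob (A k))" .
qed

lemma indep_sets_integral_mult:
  fixes X Y :: "'a \<Rightarrow> real"
  assumes F: "indep_sets F I" "\<And>i. i \<in> I \<Longrightarrow> Int_stable (F i)"
    and KL: "K \<inter> L = {}" "K \<subseteq> I" "L \<subseteq> I"
    and X: "X \<in> borel_measurable (sigma (space M) (\<Union>i\<in>K. F i))" "integrable M X"
    and Y: "Y \<in> borel_measurable (sigma (space M) (\<Union>i\<in>L. F i))" "integrable M Y"
  shows "(\<integral>w. X w * Y w \<partial>M) = (\<integral>w. X w \<partial>M) * (\<integral>w. Y w \<partial>M)"
proof -
  let ?S = "\<lambda>K. sigma_sets (space M) (\<Union>i\<in>K. F i)"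
  have "indep_sets (\<lambda>b. ?S (case_bool K L b)) UNIV"
  proof (rule indep_sets_collect_sigma)
    show "indep_sets F (\<Union>b. case_bool K L b)"
      using KL by (intro indep_sets_mono_index[OF _ F(1)]) (auto split: bool.split_asm)
    show "Int_stable (F i)" if "i \<in> case_bool K L b" for i b
      using that KL F(2) by (cases b) auto
    show "disjoint_family_on (case_bool K L) UNIV"
      using KL by (auto simp: disjoint_family_on_def split: bool.split)
  qed
  then have KL_indep: "indep_set (?S K) (?S L)"
    unfolding indep_set_def by (rule indep_sets_mono_sets) (auto split: bool.split)
  have gen: "(\<Union>i\<in>K'. F i) \<subseteq> Pow (space M)" if "K' \<subseteq> I" for K'
    using indep_sets_events[OF F(1)] that sets.space_closed by blast
  have pre: "Z -` A \<inter> space M \<in> ?S K'"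
    if "Z \<in> borel_measurable (sigma (space M) (\<Union>i\<in>K'. F i))" "K' \<subseteq> I" "A \<in> sets borel"
    for Z :: "'a \<Rightarrow> real" and K' A
    using measurable_sets[OF that(1,3)] gen[OF that(2)] by (simp add: sets_measure_of space_measure_of_conv)
  have "sigma_sets (space M) {X -` A \<inter> space M | A. A \<in> sets borel} \<subseteq> ?S K"
    using pre[OF X(1) KL(2)] by (intro sigma_sets_mono) blast
  moreover have "sigma_sets (space M) {Y -` A \<inter> space M | A. A \<in> sets borel} \<subseteq> ?S L"
    using pre[OF Y(1) KL(3)] by (intro sigma_sets_mono) blast
  ultimately have "indep_set (sigma_sets (space M) {X -` A \<inter> space M | A. A \<in> sets borel})
      (sigma_sets (space M) {Y -` A \<inter> space M | A. A \<in> sets borel})"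
    using KL_indep unfolding indep_set_def
    by (elim indep_sets_mono_sets) (auto split: bool.split)
  then have "indep_var borel X borel Y"
    unfolding indep_var_eq using X(2) Y(2) by (blast intro: borel_measurable_integrable)
  then show ?thesis
    using X(2) Y(2) by (rule indep_var_lebesgue_integral)
qed

end

section \<open>Domination by past noise\<close>

definition noise_dominated :: "'a set \<Rightarrow> (nat \<Rightarrow> 'a \<Rightarrow> real) \<Rightarrow> nat \<Rightarrow> ('a \<Rightarrow> real) \<Rightarrow> bool" where
  "noise_dominated \<Omega> v n f \<longleftrightarrow> (\<exists>C. \<forall>w\<in>\<Omega>. \<bar>f w\<bar> \<le> C * (\<Sum>j<n. \<bar>v j w\<bar>))"

lemma noise_dominated_nonneg:
  "noise_dominated \<Omega> v n f \<longleftrightarrow> (\<exists>C\<ge>0. \<forall>w\<in>\<Omega>. \<bar>f w\<bar> \<le> C * (\<Sum>j<n. \<bar>v j w\<bar>))"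
proof
  assume "noise_dominated \<Omega> v n f"
  then obtain C where C: "\<forall>w\<in>\<Omega>. \<bar>f w\<bar> \<le> C * (\<Sum>j<n. \<bar>v j w\<bar>)"
    unfolding noise_dominated_def by blast
  have "C * (\<Sum>j<n. \<bar>v j w\<bar>) \<le> \<bar>C\<bar> * (\<Sum>j<n. \<bar>v j w\<bar>)" for w
    by (intro mult_right_mono) (auto intro: sum_nonneg)
  then show "\<exists>C\<ge>0. \<forall>w\<in>\<Omega>. \<bar>f w\<bar> \<le> C * (\<Sum>j<n. \<bar>v j w\<bar>)"
    using C by (intro exI[of _ "\<bar>C\<bar>"]) (auto intro: order_trans)
qed (auto simp: noise_dominated_def)

lemma noise_dominated_noise: "j < n \<Longrightarrow> noise_dominated \<Omega> v n (v j)"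
  unfolding noise_dominated_def by (intro exI[of _ 1]) (auto intro!: member_le_sum)

lemma noise_dominated_zero: "noise_dominated \<Omega> v n (\<lambda>w. 0)"
  unfolding noise_dominated_def by (intro exI[of _ 0]) auto

lemma noise_dominated_mono:
  assumes "m \<le> n" "noise_dominated \<Omega> v m f"
  shows "noise_dominated \<Omega> v n f"
proof -
  obtain C where "C \<ge> 0" and C: "\<forall>w\<in>\<Omega>. \<bar>f w\<bar> \<le> C * (\<Sum>j<m. \<bar>v j w\<bar>)"
    using assms(2) unfolding noise_dominated_nonneg by blast
  have "(\<Sum>j<m. \<bar>v j w\<bar>) \<le> (\<Sum>j<n. \<bar>v j w\<bar>)" for w
    using assms(1) by (intro sum_mono2) auto
  then have "\<forall>w\<in>\<Omega>. \<bar>f w\<bar> \<le> C * (\<Sum>j<n. \<bar>v j w\<bar>)"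
    using C \<open>C \<ge> 0\<close> by (meson mult_left_mono order_trans)
  then show ?thesis
    unfolding noise_dominated_def by blast
qed

lemma noise_dominated_add:
  assumes "noise_dominated \<Omega> v n f" "noise_dominated \<Omega> v n g"
  shows "noise_dominated \<Omega> v n (\<lambda>w. f w + g w)"
proof -
  obtain C D where C: "\<forall>w\<in>\<Omega>. \<bar>f w\<bar> \<le> C * (\<Sum>j<n. \<bar>v j w\<bar>)"
    and D: "\<forall>w\<in>\<Omega>. \<bar>g w\<bar> \<le> D * (\<Sum>j<n. \<bar>v j w\<bar>)"
    using assms unfolding noise_dominated_def by blast
  have "\<forall>w\<in>\<Omega>. \<bar>f w + g w\<bar> \<le> (C + D) * (\<Sum>j<n. \<bar>v j w\<bar>)"
    using C D by (auto simp: distrib_right intro: order_trans[OF abs_triangle_ineq add_mono])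
  then show ?thesis
    unfolding noise_dominated_def by blast
qed

lemma noise_dominated_mult_bounded:
  assumes g: "\<And>w. w \<in> \<Omega> \<Longrightarrow> \<bar>g w\<bar> \<le> B" and f: "noise_dominated \<Omega> v n f"
  shows "noise_dominated \<Omega> v n (\<lambda>w. g w * f w)"
proof -
  obtain C where "C \<ge> 0" and C: "\<forall>w\<in>\<Omega>. \<bar>f w\<bar> \<le> C * (\<Sum>j<n. \<bar>v j w\<bar>)"
    using f unfolding noise_dominated_nonneg by blast
  have "\<bar>g w * f w\<bar> \<le> (B * C) * (\<Sum>j<n. \<bar>v j w\<bar>)" if "w \<in> \<Omega>" for w
  proof -
    have "\<bar>g w * f w\<bar> \<le> B * (C * (\<Sum>j<n. \<bar>v j w\<bar>))"
      unfolding abs_mult using g[OF that] C that by (intro mult_mono) auto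
    then show ?thesis
      by (simp add: mult.assoc)
  qed
  then show ?thesis
    unfolding noise_dominated_def by blast
qed

lemma noise_dominated_scale: "noise_dominated \<Omega> v n f \<Longrightarrow> noise_dominated \<Omega> v n (\<lambda>w. c * f w)"
  using noise_dominated_mult_bounded[of \<Omega> "\<lambda>_. c" "\<bar>c\<bar>"] by simp

lemma noise_dominated_diff:
  "noise_dominated \<Omega> v n f \<Longrightarrow> noise_dominated \<Omega> v n g \<Longrightarrow> noise_dominated \<Omega> v n (\<lambda>w. f w - g w)"
  using noise_dominated_add[of \<Omega> v n f "\<lambda>w. (-1) * g w"] noise_dominated_scale[of \<Omega> v n g "-1"] by simp

lemma noise_dominated_sum:
  "finite S \<Longrightarrow> (\<And>i. i \<in> S \<Longrightarrow> noise_dominated \<Omega> v n (f i))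
    \<Longrightarrow> noise_dominated \<Omega> v n (\<lambda>w. \<Sum>i\<in>S. f i w)"
  by (induction S rule: finite_induct) (auto intro: noise_dominated_zero noise_dominated_add)

lemma noise_dominated_cong:
  "(\<And>w. w \<in> \<Omega> \<Longrightarrow> f w = g w) \<Longrightarrow> noise_dominated \<Omega> v n g \<Longrightarrow> noise_dominated \<Omega> v n f"
  unfolding noise_dominated_def by auto

lemma (in finite_measure) integrable_mult_noise_dominated:
  fixes g :: "'a \<Rightarrow> real"
  assumes v: "\<And>j. v j \<in> borel_measurable M" "\<And>j. integrable M (\<lambda>w. (v j w)\<^sup>2)"
    and g: "g \<in> borel_measurable M" "integrable M (\<lambda>w. (g w)\<^sup>2)"
    and f: "f \<in> borel_measurable M" "noise_dominated (space M) v n f"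
  shows "integrable M (\<lambda>w. g w * f w)"
proof -
  obtain C where "C \<ge> 0" and C: "\<forall>w\<in>space M. \<bar>f w\<bar> \<le> C * (\<Sum>j<n. \<bar>v j w\<bar>)"
    using f(2) unfolding noise_dominated_nonneg by blast
  show ?thesis
  proof (rule Bochner_Integration.integrable_bound)
    show "integrable M (\<lambda>w. C * (\<Sum>j<n. (g w)\<^sup>2 + (v j w)\<^sup>2))"
      using v g by (intro Bochner_Integration.integrable_mult_right Bochner_Integration.integrable_sum
          Bochner_Integration.integrable_add)
    show "(\<lambda>w. g w * f w) \<in> borel_measurable M"
      using g f by measurable
    show "AE w in M. norm (g w * f w) \<le> norm (C * (\<Sum>j<n. (g w)\<^sup>2 + (v j w)\<^sup>2))"
    proof (rule AE_I2)
      have ab: "\<bar>a\<bar> * \<bar>b\<bar> \<le> a\<^sup>2 + b\<^sup>2" for a b :: real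
      proof -
        have "\<bar>a\<bar> * \<bar>b\<bar> \<le> 2 * \<bar>a\<bar> * \<bar>b\<bar>"
          by simp
        also have "\<dots> \<le> \<bar>a\<bar>\<^sup>2 + \<bar>b\<bar>\<^sup>2"
          by (rule sum_squares_bound)
        finally show ?thesis
          by simp
      qed
      fix w assume "w \<in> space M"
      have "\<bar>g w * f w\<bar> \<le> \<bar>g w\<bar> * (C * (\<Sum>j<n. \<bar>v j w\<bar>))"
        unfolding abs_mult using C \<open>w \<in> space M\<close> by (intro mult_left_mono) auto
      also have "\<dots> = C * (\<Sum>j<n. \<bar>g w\<bar> * \<bar>v j w\<bar>)"
        by (simp add: sum_distrib_left mult_ac)
      also have "\<dots> \<le> C * (\<Sum>j<n. (g w)\<^sup>2 + (v j w)\<^sup>2)"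
        using ab \<open>C \<ge> 0\<close> by (intro mult_left_mono sum_mono) auto
      finally show "norm (g w * f w) \<le> norm (C * (\<Sum>j<n. (g w)\<^sup>2 + (v j w)\<^sup>2))"
        by simp
    qed
  qed
qed

lemma (in finite_measure) integrable_noise_dominated:
  fixes f :: "'a \<Rightarrow> real"
  assumes "\<And>j. v j \<in> borel_measurable M" "\<And>j. integrable M (\<lambda>w. (v j w)\<^sup>2)"
    and "f \<in> borel_measurable M" "noise_dominated (space M) v n f"
  shows "integrable M f"
  using integrable_mult_noise_dominated[OF assms(1,2) _ _ assms(3,4), of "\<lambda>_. 1"] by simp

section \<open>Information generated by noise and delays\<close>

definition obs_events :: "'a set \<Rightarrow> (nat \<Rightarrow> 'a \<Rightarrow> real) \<Rightarrow> (nat \<Rightarrow> 'a \<Rightarrow> nat) \<Rightarrow> nat + nat \<Rightarrow> 'a set set"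
  where "obs_events \<Omega> v tau = case_sum
    (\<lambda>j. {v j -` A \<inter> \<Omega> | A. A \<in> sets borel}) (\<lambda>j. {tau j -` A \<inter> \<Omega> | A. A \<in> sets (count_space UNIV)})"

definition obs_sigma :: "'a set \<Rightarrow> (nat \<Rightarrow> 'a \<Rightarrow> real) \<Rightarrow> (nat \<Rightarrow> 'a \<Rightarrow> nat) \<Rightarrow> (nat + nat) set \<Rightarrow> 'a measure"
  where "obs_sigma \<Omega> v tau K = sigma \<Omega> (\<Union>k\<in>K. obs_events \<Omega> v tau k)"

definition observed_before :: "nat \<Rightarrow> (nat + nat) set"
  where "observed_before n = Inl ` {..<n} \<union> Inr ` {..<n}"

lemma obs_sigma_generators: "(\<Union>k\<in>K. obs_events \<Omega> v tau k) \<subseteq> Pow \<Omega>"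
  unfolding obs_events_def by (auto split: sum.split_asm)

lemma Int_stable_obs_events: "Int_stable (obs_events \<Omega> v tau k)"
  unfolding obs_events_def by (cases k) (simp_all only: sum.case Int_stable_preimages)

lemma space_obs_sigma [simp]: "space (obs_sigma \<Omega> v tau K) = \<Omega>"
  unfolding obs_sigma_def by (simp add: space_measure_of_conv)

lemma measurable_obs_sigma_noise:
  assumes "Inl j \<in> K"
  shows "v j \<in> borel_measurable (obs_sigma \<Omega> v tau K)"
  unfolding obs_sigma_def
proof (rule measurable_sigma_generatorI[OF obs_sigma_generators])
  fix A :: "real set" assume "A \<in> sets borel"
  then have "v j -` A \<inter> \<Omega> \<in> obs_events \<Omega> v tau (Inl j)"
    by (auto simp: obs_events_def)
  then show "v j -` A \<inter> \<Omega> \<in> (\<Union>k\<in>K. obs_events \<Omega> v tau k)"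
    using assms by blast
qed simp

lemma measurable_obs_sigma_delay:
  assumes "Inr j \<in> K"
  shows "tau j \<in> measurable (obs_sigma \<Omega> v tau K) (count_space UNIV)"
  unfolding obs_sigma_def
proof (rule measurable_sigma_generatorI[OF obs_sigma_generators])
  fix A :: "nat set" assume "A \<in> sets (count_space UNIV)"
  then have "tau j -` A \<inter> \<Omega> \<in> obs_events \<Omega> v tau (Inr j)"
    by (auto simp: obs_events_def)
  then show "tau j -` A \<inter> \<Omega> \<in> (\<Union>k\<in>K. obs_events \<Omega> v tau k)"
    using assms by blast
qed simp

lemma measurable_obs_sigma_kdelta:
  assumes "Inr j \<in> K"
  shows "(\<lambda>w. kdelta (tau j w) i) \<in> borel_measurable (obs_sigma \<Omega> v tau K)"
  using measurable_obs_sigma_delay[OF assms] borel_measurable_count_space by (rule measurable_compose)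

lemma measurable_obs_sigma_mono:
  assumes "K \<subseteq> L" "f \<in> measurable (obs_sigma \<Omega> v tau K) N"
  shows "f \<in> measurable (obs_sigma \<Omega> v tau L) N"
  using measurable_sigma_mono[OF _ obs_sigma_generators assms(2)[unfolded obs_sigma_def]] assms(1)
  unfolding obs_sigma_def by blast

lemma subalgebra_obs_sigma:
  assumes "\<And>j. v j \<in> borel_measurable M" "\<And>j. tau j \<in> measurable M (count_space UNIV)"
  shows "subalgebra M (obs_sigma (space M) v tau K)"
proof -
  have "obs_events (space M) v tau k \<subseteq> sets M" for k
    using assms unfolding obs_events_def by (cases k) (auto intro: measurable_sets)
  then have "sigma_sets (space M) (\<Union>k\<in>K. obs_events (space M) v tau k) \<subseteq> sets M"
    by (intro sets.sigma_sets_subset UN_least)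
  then show ?thesis
    unfolding subalgebra_def obs_sigma_def
    by (simp add: sets_measure_of[OF obs_sigma_generators] space_measure_of_conv)
qed

lemma (in prob_space) indep_obs_events:
  fixes v :: "nat \<Rightarrow> 'a \<Rightarrow> real" and tau :: "nat \<Rightarrow> 'a \<Rightarrow> nat"
  assumes tau_indep: "indep_vars (\<lambda>_. count_space UNIV) tau UNIV"
    and v_indep: "indep_vars (\<lambda>_. borel) v UNIV"
    and tau_v_indep: "indep_set
        {(\<lambda>w n. tau n w) -` S \<inter> space M | S. S \<in> sets (Pi\<^sub>M UNIV (\<lambda>_. count_space (UNIV :: nat set)))}
        {(\<lambda>w k. v k w) -` S \<inter> space M | S. S \<in> sets (Pi\<^sub>M UNIV (\<lambda>_. (borel :: real measure)))}"
  shows "indep_sets (obs_events (space M) v tau) UNIV"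
proof -
  let ?V = "\<lambda>j. {v j -` A \<inter> space M | A. A \<in> sets borel}"
  let ?T = "\<lambda>j. {tau j -` A \<inter> space M | A. A \<in> sets (count_space UNIV)}"
  have iV: "indep_sets ?V UNIV"
    using v_indep unfolding indep_vars_def2 by (rule conjunct2)
  have iT: "indep_sets ?T UNIV"
    using tau_indep unfolding indep_vars_def2 by (rule conjunct2)
  have "sigma_sets (space M) (\<Union>j. ?V j)
      \<subseteq> {(\<lambda>w k. v k w) -` S \<inter> space M | S. S \<in> sets (Pi\<^sub>M UNIV (\<lambda>_. borel))}"
    by (rule sigma_sets_component_preimages_subset) (simp add: space_PiM)
  moreover have "sigma_sets (space M) (\<Union>j. ?T j)
      \<subseteq> {(\<lambda>w n. tau n w) -` S \<inter> space M | S. S \<in> sets (Pi\<^sub>M UNIV (\<lambda>_. count_space UNIV))}"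
    by (rule sigma_sets_component_preimages_subset) (simp add: space_PiM)
  ultimately have "indep_set (sigma_sets (space M) (\<Union>j. ?V j)) (sigma_sets (space M) (\<Union>j. ?T j))"
    by (rule indep_set_subsets_swap[OF tau_v_indep])
  then have "indep_sets (case_sum ?V ?T) (UNIV <+> UNIV)"
    by (rule indep_sets_case_sum[OF iV iT])
  then show ?thesis
    unfolding obs_events_def UNIV_Plus_UNIV .
qed

section \<open>Causality of the feedback loop\<close>

locale feedback_loop =
  fixes \<Omega> :: "'a set" and v u y :: "nat \<Rightarrow> 'a \<Rightarrow> real" and tau :: "nat \<Rightarrow> 'a \<Rightarrow> nat"
    and T :: nat and alpha hP hK :: "nat \<Rightarrow> real"
  assumes plant: "\<And>k w. w \<in> \<Omega> \<Longrightarrow>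
        y k w = (\<Sum>j<k. hP (k - j) * (v j w - chan_out T alpha tau u j w))"
    and controller: "\<And>k w. w \<in> \<Omega> \<Longrightarrow> u k w = (\<Sum>j\<le>k. hK (k - j) * y j w)"
begin

lemma input_induct:
  fixes Q :: "nat \<Rightarrow> ('a \<Rightarrow> real) \<Rightarrow> bool"
  assumes noise: "\<And>j n. j < n \<Longrightarrow> Q n (v j)"
    and delay: "\<And>m n i f. m < n \<Longrightarrow> Q m f \<Longrightarrow> Q n (\<lambda>w. kdelta (tau m w) i * f w)"
    and scale: "\<And>n c f. Q n f \<Longrightarrow> Q n (\<lambda>w. c * f w)"
    and diff: "\<And>n f g. Q n f \<Longrightarrow> Q n g \<Longrightarrow> Q n (\<lambda>w. f w - g w)"
    and summation: "\<And>n (S :: nat set) f. finite S \<Longrightarrow> (\<And>i. i \<in> S \<Longrightarrow> Q n (f i)) \<Longrightarrow> Q n (\<lambda>w. \<Sum>i\<in>S. f i w)"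
    and cong: "\<And>n f g. (\<And>w. w \<in> \<Omega> \<Longrightarrow> f w = g w) \<Longrightarrow> Q n g \<Longrightarrow> Q n f"
  shows "Q n (u n)"
  \<comment> \<open>Strict properness (the plant sum stops at j < k) makes u n depend on u m for m < n only.\<close>
proof (induction n rule: less_induct)
  case (less n)
  have channel: "Q n (chan_out T alpha tau u j)" if "j < n" for j
    unfolding chan_out_def
  proof (rule summation)
    fix i assume "i \<in> {i. i \<le> T \<and> i \<le> j}"
    then have "j - i < n"
      using that by auto
    then have "Q n (\<lambda>w. alpha i * (kdelta (tau (j - i) w) i * u (j - i) w))"
      by (intro scale delay less.IH)
    then show "Q n (\<lambda>w. alpha i * kdelta (tau (j - i) w) i * u (j - i) w)"
      by (rule cong[rotated]) simp
  qed auto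
  have plant_output: "Q n (y k)" if "k \<le> n" for k
  proof -
    have "Q n (\<lambda>w. \<Sum>j<k. hP (k - j) * (v j w - chan_out T alpha tau u j w))"
      using that by (intro summation scale diff noise channel) auto
    then show ?thesis
      by (rule cong[rotated]) (rule plant)
  qed
  have "Q n (\<lambda>w. \<Sum>j\<le>n. hK (n - j) * y j w)"
    by (intro summation scale plant_output) auto
  then show "Q n (u n)"
    by (rule cong[rotated]) (rule controller)
qed

lemma measurable_input: "u n \<in> borel_measurable (obs_sigma \<Omega> v tau (observed_before n))"
proof (rule input_induct[where Q="\<lambda>n f. f \<in> borel_measurable (obs_sigma \<Omega> v tau (observed_before n))"])
  fix j n :: nat assume "j < n"
  then show "v j \<in> borel_measurable (obs_sigma \<Omega> v tau (observed_before n))"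
    by (intro measurable_obs_sigma_noise) (simp add: observed_before_def)
next
  fix m n i and f :: "'a \<Rightarrow> real"
  assume "m < n" and f: "f \<in> borel_measurable (obs_sigma \<Omega> v tau (observed_before m))"
  then have earlier: "observed_before m \<subseteq> observed_before n" and delayed: "Inr m \<in> observed_before n"
    by (auto simp: observed_before_def)
  have "f \<in> borel_measurable (obs_sigma \<Omega> v tau (observed_before n))"
    using earlier f by (rule measurable_obs_sigma_mono)
  moreover have "(\<lambda>w. kdelta (tau m w) i) \<in> borel_measurable (obs_sigma \<Omega> v tau (observed_before n))"
    using delayed by (rule measurable_obs_sigma_kdelta)
  ultimately show "(\<lambda>w. kdelta (tau m w) i * f w) \<in> borel_measurable (obs_sigma \<Omega> v tau (observed_before n))"
    by (intro borel_measurable_times)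
next
  fix n and f g :: "'a \<Rightarrow> real"
  assume "\<And>w. w \<in> \<Omega> \<Longrightarrow> f w = g w" "g \<in> borel_measurable (obs_sigma \<Omega> v tau (observed_before n))"
  then show "f \<in> borel_measurable (obs_sigma \<Omega> v tau (observed_before n))"
    using measurable_cong[of "obs_sigma \<Omega> v tau (observed_before n)" f g] by simp
next
  fix n c and f :: "'a \<Rightarrow> real"
  assume "f \<in> borel_measurable (obs_sigma \<Omega> v tau (observed_before n))"
  then show "(\<lambda>w. c * f w) \<in> borel_measurable (obs_sigma \<Omega> v tau (observed_before n))"
    by (rule borel_measurable_times[OF borel_measurable_const])
next
  fix n and f g :: "'a \<Rightarrow> real"
  assume "f \<in> borel_measurable (obs_sigma \<Omega> v tau (observed_before n))"
    "g \<in> borel_measurable (obs_sigma \<Omega> v tau (observed_before n))"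
  then show "(\<lambda>w. f w - g w) \<in> borel_measurable (obs_sigma \<Omega> v tau (observed_before n))"
    by (rule borel_measurable_diff)
next
  fix n and S :: "nat set" and f :: "nat \<Rightarrow> 'a \<Rightarrow> real"
  assume "\<And>i. i \<in> S \<Longrightarrow> f i \<in> borel_measurable (obs_sigma \<Omega> v tau (observed_before n))"
  then show "(\<lambda>w. \<Sum>i\<in>S. f i w) \<in> borel_measurable (obs_sigma \<Omega> v tau (observed_before n))"
    by (rule borel_measurable_sum)
qed

lemma noise_dominated_input: "noise_dominated \<Omega> v n (u n)"
proof (rule input_induct[where Q="noise_dominated \<Omega> v"])
  fix m n i f
  assume "m < n" "noise_dominated \<Omega> v m f"
  then have "noise_dominated \<Omega> v n f"
    using noise_dominated_mono[of m n] by simp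
  then show "noise_dominated \<Omega> v n (\<lambda>w. kdelta (tau m w) i * f w)"
    by (rule noise_dominated_mult_bounded[where B=1, rotated]) (simp add: kdelta_def)
qed (fact noise_dominated_noise noise_dominated_scale noise_dominated_diff noise_dominated_sum
    noise_dominated_cong)+

end

section \<open>Orthogonality of the noise to the channel disturbance\<close>

context prob_space
begin

lemma has_bochner_integral_centred_delay:
  assumes tau: "tau \<in> measurable M (count_space UNIV)"
    and tau_dist: "prob {w \<in> space M. tau w = i} = p"
  shows "has_bochner_integral M (\<lambda>w. kdelta (tau w) i - p) 0"
proof -
  have "(\<lambda>w. kdelta (tau w) i) \<in> borel_measurable M"
    using tau borel_measurable_count_space by (rule measurable_compose)
  then have integrable: "integrable M (\<lambda>w. kdelta (tau w) i)"
    by (intro integrable_const_bound[where B=1] AE_I2) (simp_all add: kdelta_def)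
  have "expectation (\<lambda>w. kdelta (tau w) i) = expectation (indicator {w \<in> space M. tau w = i})"
    by (intro Bochner_Integration.integral_cong) (auto simp: kdelta_def indicator_def)
  also have "\<dots> = prob ({w \<in> space M. tau w = i} \<inter> space M)"
    by simp
  also have "{w \<in> space M. tau w = i} \<inter> space M = {w \<in> space M. tau w = i}"
    by blast
  finally have "expectation (\<lambda>w. kdelta (tau w) i) = p"
    using tau_dist by simp
  with integrable show ?thesis
    by (simp add: has_bochner_integral_iff prob_space)
qed

lemma integral_noise_mult_eq_0:
  assumes indep: "indep_sets (obs_events (space M) v tau) UNIV"
    and v: "integrable M (v k)" "expectation (v k) = 0"
    and g: "g \<in> borel_measurable (obs_sigma (space M) v tau (- {Inl k}))" "integrable M g"
  shows "(\<integral>w. v k w * g w \<partial>M) = 0"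
proof -
  have "(\<integral>w. v k w * g w \<partial>M) = expectation (v k) * expectation g"
  proof (rule indep_sets_integral_mult[OF indep Int_stable_obs_events, of "{Inl k}" "- {Inl k}",
        folded obs_sigma_def])
    show "v k \<in> borel_measurable (obs_sigma (space M) v tau {Inl k})"
      by (rule measurable_obs_sigma_noise) simp
  qed (simp_all add: v g)
  then show ?thesis
    using v(2) by simp
qed

lemma integral_centred_delay_mult_eq_0:
  assumes indep: "indep_sets (obs_events (space M) v tau) UNIV"
    and tau: "tau n \<in> measurable M (count_space UNIV)" "prob {w \<in> space M. tau n w = i} = p"
    and h: "h \<in> borel_measurable (obs_sigma (space M) v tau (- {Inr n}))" "integrable M h"
  shows "(\<integral>w. (kdelta (tau n w) i - p) * h w \<partial>M) = 0"
proof -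
  have centred: "has_bochner_integral M (\<lambda>w. kdelta (tau n w) i - p) 0"
    using tau by (rule has_bochner_integral_centred_delay)
  have "(\<integral>w. (kdelta (tau n w) i - p) * h w \<partial>M) = (\<integral>w. kdelta (tau n w) i - p \<partial>M) * expectation h"
  proof (rule indep_sets_integral_mult[OF indep Int_stable_obs_events, of "{Inr n}" "- {Inr n}",
        folded obs_sigma_def])
    show "(\<lambda>w. kdelta (tau n w) i - p) \<in> borel_measurable (obs_sigma (space M) v tau {Inr n})"
      by (intro borel_measurable_diff borel_measurable_const measurable_obs_sigma_kdelta) simp
  qed (simp_all add: h integrable.intros[OF centred])
  then show ?thesis
    using centred by (simp add: has_bochner_integral_iff)
qed

lemma has_bochner_integral_noise_delay_term:
  fixes v :: "nat \<Rightarrow> 'a \<Rightarrow> real" and tau :: "nat \<Rightarrow> 'a \<Rightarrow> nat" and f :: "'a \<Rightarrow> real"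
  assumes indep: "indep_sets (obs_events (space M) v tau) UNIV"
    and v_meas: "\<And>j. v j \<in> borel_measurable M"
    and v_sq: "\<And>j. integrable M (\<lambda>w. (v j w)\<^sup>2)"
    and v_mean: "expectation (v k) = 0"
    and tau_meas: "\<And>j. tau j \<in> measurable M (count_space UNIV)"
    and tau_dist: "prob {w \<in> space M. tau n w = i} = p"
    and f_meas: "f \<in> borel_measurable (obs_sigma (space M) v tau (observed_before n))"
    and f_dom: "noise_dominated (space M) v n f"
  shows "has_bochner_integral M (\<lambda>w. v k w * ((kdelta (tau n w) i - p) * f w)) 0"
proof -
  define om where "om w = kdelta (tau n w) i - p" for w
  have om_obs: "om \<in> borel_measurable (obs_sigma (space M) v tau K)" if "Inr n \<in> K" for K
    unfolding om_def by (intro borel_measurable_diff borel_measurable_const measurable_obs_sigma_kdelta that)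
  have f_obs: "f \<in> borel_measurable (obs_sigma (space M) v tau K)" if "observed_before n \<subseteq> K" for K
    using that f_meas by (rule measurable_obs_sigma_mono)
  note sub = subalgebra_obs_sigma[OF v_meas tau_meas]
  have om_f_M: "(\<lambda>w. om w * f w) \<in> borel_measurable M"
    using measurable_from_subalg[OF sub om_obs[OF singletonI]] measurable_from_subalg[OF sub f_meas]
    by (intro borel_measurable_times) simp_all
  have om_f_dom: "noise_dominated (space M) v n (\<lambda>w. om w * f w)"
    using f_dom by (rule noise_dominated_mult_bounded[where B="1 + \<bar>p\<bar>", rotated])
      (auto simp: om_def kdelta_def)
  have "(\<integral>w. v k w * (om w * f w) \<partial>M) = 0"
  proof (cases "n \<le> k")
    case True
    then have "(\<lambda>w. om w * f w) \<in> borel_measurable (obs_sigma (space M) v tau (- {Inl k}))"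
      by (intro borel_measurable_times om_obs f_obs) (auto simp: observed_before_def)
    then show ?thesis
      using indep square_integrable_imp_integrable[OF v_meas v_sq] v_mean
        integrable_noise_dominated[OF v_meas v_sq om_f_M om_f_dom]
      by (intro integral_noise_mult_eq_0)
  next
    case False
    then have "(\<lambda>w. v k w * f w) \<in> borel_measurable (obs_sigma (space M) v tau (- {Inr n}))"
      by (intro borel_measurable_times measurable_obs_sigma_noise f_obs) (auto simp: observed_before_def)
    then have "(\<integral>w. om w * (v k w * f w) \<partial>M) = 0"
      unfolding om_def using indep tau_meas tau_dist
        integrable_mult_noise_dominated[OF v_meas v_sq v_meas v_sq measurable_from_subalg[OF sub f_meas] f_dom]
      by (intro integral_centred_delay_mult_eq_0)
    then show ?thesis
      by (simp add: mult.left_commute)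
  qed
  moreover have "integrable M (\<lambda>w. v k w * (om w * f w))"
    by (rule integrable_mult_noise_dominated[OF v_meas v_sq v_meas v_sq om_f_M om_f_dom])
  ultimately show ?thesis
    unfolding om_def by (simp add: has_bochner_integral_iff)
qed

end

lemma d_sig_eq_sum:
  "d_sig T alpha p tau u k w
    = (\<Sum>i | i \<le> T \<and> i \<le> k. alpha i * (kdelta (tau (k - i) w) i - p i) * u (k - i) w)"
  unfolding d_sig_def omega_w_def by (intro sum.cong refl) auto

theorem lemma6:
  fixes M :: "'a measure" and T :: nat and p alpha :: "nat \<Rightarrow> real"
    and tau :: "nat \<Rightarrow> 'a \<Rightarrow> nat" and v u y :: "nat \<Rightarrow> 'a \<Rightarrow> real"
    and AP :: "real^'n^'n" and BP CP :: "real^'n"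
    and AK :: "real^'m^'m" and BK CK :: "real^'m" and DK :: real
  assumes M: "prob_space M"
    and tau_meas: "\<And>n. tau n \<in> measurable M (count_space UNIV)"
    and tau_range: "\<And>n w. w \<in> space M \<Longrightarrow> tau n w \<le> T"
    and tau_dist: "\<And>n i. measure M {w \<in> space M. tau n w = i} = p i"
    and p_sum: "(\<Sum>i\<le>T. p i) = 1"
    and tau_indep: "prob_space.indep_vars M (\<lambda>_. count_space UNIV) tau UNIV"
    and v_meas: "\<And>k. v k \<in> borel_measurable M"
    and v_indep: "prob_space.indep_vars M (\<lambda>_. borel) v UNIV"
    and v_mean: "\<And>k. integral\<^sup>L M (v k) = 0"
    and v_var: "\<exists>B. \<forall>k. integrable M (\<lambda>w. (v k w)\<^sup>2) \<and> prob_space.variance M (v k) \<le> B"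
    and tau_v_indep: "prob_space.indep_set M
        {(\<lambda>w n. tau n w) -` S \<inter> space M | S. S \<in> sets (Pi\<^sub>M UNIV (\<lambda>_. count_space (UNIV :: nat set)))}
        {(\<lambda>w k. v k w) -` S \<inter> space M | S. S \<in> sets (Pi\<^sub>M UNIV (\<lambda>_. (borel :: real measure)))}"
    and plant: "\<And>k w. w \<in> space M \<Longrightarrow>
        y k w = (\<Sum>j<k. ss_impulse AP BP CP 0 (k - j) * (v j w - chan_out T alpha tau u j w))"
    and controller: "\<And>k w. w \<in> space M \<Longrightarrow>
        u k w = (\<Sum>j\<le>k. ss_impulse AK BK CK DK (k - j) * y j w)"
  shows "integral\<^sup>L M (\<lambda>w. v k1 w * d_sig T alpha p tau u k2 w) = 0"
proof -
  interpret prob_space M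
    by (rule M)
  have "feedback_loop (space M) v u y tau T alpha (ss_impulse AP BP CP 0) (ss_impulse AK BK CK DK)"
    unfolding feedback_loop_def using plant controller by blast
  then interpret feedback_loop "space M" v u y tau T alpha "ss_impulse AP BP CP 0" "ss_impulse AK BK CK DK" .
  have v_sq: "\<And>j. integrable M (\<lambda>w. (v j w)\<^sup>2)"
    using v_var by blast
  have indep: "indep_sets (obs_events (space M) v tau) UNIV"
    using tau_indep v_indep tau_v_indep by (rule indep_obs_events)
  have delay_term: "has_bochner_integral M (\<lambda>w. v k1 w * ((kdelta (tau n w) i - p i) * u n w)) 0" for n i
    by (rule has_bochner_integral_noise_delay_term[OF indep v_meas v_sq v_mean tau_meas tau_dist
          measurable_input noise_dominated_input])
  have d: "v k1 w * d_sig T alpha p tau u k2 w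
      = (\<Sum>i | i \<le> T \<and> i \<le> k2. alpha i * (v k1 w * ((kdelta (tau (k2 - i) w) i - p i) * u (k2 - i) w)))"
    for w
    by (simp add: d_sig_eq_sum sum_distrib_left mult_ac)
  have "has_bochner_integral M
      (\<lambda>w. \<Sum>i | i \<le> T \<and> i \<le> k2. alpha i * (v k1 w * ((kdelta (tau (k2 - i) w) i - p i) * u (k2 - i) w)))
      (\<Sum>i | i \<le> T \<and> i \<le> k2. alpha i * 0)"
    by (intro has_bochner_integral_sum has_bochner_integral_mult_right delay_term)
  then have "has_bochner_integral M (\<lambda>w. v k1 w * d_sig T alpha p tau u k2 w) 0"
    by (simp add: d)
  then show ?thesis
    by (rule has_bochner_integral_integral_eq)
qed

end
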